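(* Let $\xi>0$ and $R>0$. Under Assumption 1 there exists $\gamma_\xi>0$ such that for all $(x,t,p,y)\in\mathbb{R}^{n\times m}_+\times\mathbb{R}^n\times\mathbb{R}^m\times\mathbb{R}^n$ with $\|(x,t,p,y)\|\le R$, $$\|F_\xi(x,t,p,y)\|\ge \gamma_\xi\,\mathrm{dist}\big((x,t,p,y),\mathcal{X}^\star\big).$$
   Context: Fisher market: $n$ buyers, $m$ goods, budgets $w_i>0$, utilities $u_{ij}\ge0$, with Assumption 1: every row and every column of $U=(u_{ij})$ contains a positive entry. $\mathcal{X}^\star$ is the solution set of the KKT system: $t_iy_i-w_i=0$; $x_{ij}(p_j-u_{ij}y_i)=0$; $p_j-u_{ij}y_i\ge0$; $\sum_i x_{ij}=1$; $t_i-\sum_j u_{ij}x_{ij}=0$; $x_{ij}\ge0$ (for all $i\in[n],j\in[m]$). The scaled KKT residual is the vector $F_\xi(x,t,p,y)=\Big((t_iy_i-w_i)_i,\ \big(x_{ij}-[x_{ij}-\tfrac1\xi(p_j-u_{ij}y_i)]_+\big)_{ij},\ ([p_j-u_{ij}y_i]_-)_{ij},\ (\sum_i x_{ij}-1)_j,\ (t_i-\sum_j u_{ij}x_{ij})_i\Big)$, where $[a]_+=\max\{a,0\}$, $[a]_-=\max\{-a,0\}$; norms are Euclidean. *)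

theory Defs
  imports "HOL-Analysis.Analysis"
begin

text \<open>Fisher market with buyers indexed by the finite type 'n and goods by the finite type 'm.  Norms on vectors and products are Euclidean (product norm is
  sqrt of sum of squared norms), so the norm of a point is the Euclidean norm of the
  stacked vector.\<close>

definition pos_part :: "real \<Rightarrow> real" where "pos_part a = max a 0"
definition neg_part :: "real \<Rightarrow> real" where "neg_part a = max (- a) 0"

definition assumption1 :: "real^'m^'n \<Rightarrow> bool" where
  "assumption1 U \<longleftrightarrow> (\<forall>i j. U$i$j \<ge> 0) \<and> (\<forall>i. \<exists>j. U$i$j > 0) \<and> (\<forall>j. \<exists>i. U$i$j > 0)"

definition KKT_set :: "real^'n \<Rightarrow> real^'m^'n \<Rightarrow>
    ((real^'m^'n) \<times> (real^'n) \<times> (real^'m) \<times> (real^'n)) set" where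
  "KKT_set w U = {(x,t,p,y).
      (\<forall>i. t$i * y$i - w$i = 0) \<and>
      (\<forall>i j. x$i$j * (p$j - U$i$j * y$i) = 0) \<and>
      (\<forall>i j. p$j - U$i$j * y$i \<ge> 0) \<and>
      (\<forall>j. (\<Sum>i\<in>UNIV. x$i$j) = 1) \<and>
      (\<forall>i. t$i - (\<Sum>j\<in>UNIV. U$i$j * x$i$j) = 0) \<and>
      (\<forall>i j. x$i$j \<ge> 0)}"

definition F_res :: "real \<Rightarrow> real^'n \<Rightarrow> real^'m^'n \<Rightarrow>
    (real^'m^'n) \<times> (real^'n) \<times> (real^'m) \<times> (real^'n) \<Rightarrow>
    (real^'n) \<times> (real^'m^'n) \<times> (real^'m^'n) \<times> (real^'m) \<times> (real^'n)" where
  "F_res \<xi> w U z = (case z of (x,t,p,y) \<Rightarrow>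
     ((\<chi> i. t$i * y$i - w$i),
      (\<chi> i j. x$i$j - pos_part (x$i$j - (1/\<xi>) * (p$j - U$i$j * y$i))),
      (\<chi> i j. neg_part (p$j - U$i$j * y$i)),
      (\<chi> j. (\<Sum>i\<in>UNIV. x$i$j) - 1),
      (\<chi> i. t$i - (\<Sum>j\<in>UNIV. U$i$j * x$i$j))))"

end

theory Submission
  imports Defs
begin

text \<open>Fix a KKT point \<open>z\<^sub>0 = (x\<^sub>0, t\<^sub>0, p\<^sub>0, y\<^sub>0)\<close>; \<open>y\<^sub>0 > 0\<close> because \<open>t\<^sub>0 y\<^sub>0 = w\<close>.
  Points of norm at most \<open>R\<close> are at bounded distance from \<open>z\<^sub>0\<close>, so only a residual
  \<open>\<epsilon> = \<parallel>F\<^sub>\<xi>(z)\<parallel>\<close> below a fixed threshold needs attention. For such \<open>z\<close> the budgets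
  \<open>y\<close> are bounded below, and the monotonicity of the KKT system gives, for every KKT point
  \<open>z'\<close> with \<open>y' = y\<^sub>0\<close>, \<open>\<parallel>y - y\<^sub>0\<parallel>\<^sup>2 = O(\<epsilon> \<parallel>z - z'\<parallel>)\<close>. Taking \<open>z' = z\<^sub>0\<close> makes
  \<open>y\<close> close to \<open>y\<^sub>0\<close>; this pins the prices to within \<open>O(\<epsilon> + \<parallel>y - y\<^sub>0\<parallel>)\<close> of \<open>p\<^sub>0\<close> and
  forces \<open>x\<^sub>i\<^sub>j = O(\<epsilon>)\<close> on every cell with positive slack \<open>p\<^sub>0\<^sub>j > u\<^sub>i\<^sub>j y\<^sub>0\<^sub>i\<close>.
  A Hoffman error bound for the polyhedron of nonnegative allocations with the column sums,
  utilities \<open>t\<^sub>0\<close> and support pattern of \<open>x\<^sub>0\<close> then yields a KKT point \<open>z' = (x', t\<^sub>0, p\<^sub>0, y\<^sub>0)\<close>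
  with \<open>\<parallel>z - z'\<parallel> = O(\<epsilon> + \<parallel>y - y\<^sub>0\<parallel>)\<close>. Using this \<open>z'\<close> in the monotonicity estimate gives
  \<open>\<parallel>y - y\<^sub>0\<parallel>\<^sup>2 = O(\<epsilon> (\<epsilon> + \<parallel>y - y\<^sub>0\<parallel>))\<close>, hence \<open>\<parallel>y - y\<^sub>0\<parallel> = O(\<epsilon>)\<close> and
  \<open>dist(z, X\<^sup>\<star>) \<le> \<parallel>z - z'\<parallel> = O(\<epsilon>)\<close>.\<close>

lemma abs_matrix_entry_le_norm: "\<bar>(A::real^'m^'n)$i$j\<bar> \<le> norm A"
  using component_le_norm_cart[of "A$i" j] Finite_Cartesian_Product.norm_nth_le[of A i] by linarith

lemma norm_le_card_mult_entry_bound: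
  fixes v :: "real^'n" and c :: real
  assumes "\<And>i. \<bar>v$i\<bar> \<le> c"
  shows "norm v \<le> CARD('n) * c"
proof -
  have "norm v \<le> (\<Sum>i\<in>UNIV. \<bar>v$i\<bar>)" by (rule norm_le_l1_cart)
  also have "\<dots> \<le> CARD('n) * c" using assms by (simp add: sum_bounded_above)
  finally show ?thesis .
qed

lemma norm_matrix_le_card_mult_entry_bound:
  fixes A :: "real^'m^'n" and c :: real
  assumes "\<And>i j. \<bar>A$i$j\<bar> \<le> c"
  shows "norm A \<le> CARD('n) * (CARD('m) * c)"
proof -
  have "norm A \<le> (\<Sum>i\<in>UNIV. norm (A$i))"
    unfolding norm_vec_def by (rule L2_set_le_sum) simp
  also have "\<dots> \<le> CARD('n) * (CARD('m) * c)"
    using sum_bounded_above[of UNIV "\<lambda>i. norm (A$i)" "CARD('m) * c"]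
      norm_le_card_mult_entry_bound[of "A$_" c] assms by simp
  finally show ?thesis .
qed

lemma norm_vec_power2: "norm (v::real^'n) ^ 2 = (\<Sum>i\<in>UNIV. (v$i)^2)"
  unfolding power2_norm_eq_inner inner_vec_def by (simp add: power2_eq_square)

lemma norm_le_norm_quadruple:
  fixes a :: "'a::real_normed_vector" and b :: "'b::real_normed_vector"
    and c :: "'c::real_normed_vector" and d :: "'d::real_normed_vector"
  shows "norm a \<le> norm (a,b,c,d)" "norm b \<le> norm (a,b,c,d)"
    "norm c \<le> norm (a,b,c,d)" "norm d \<le> norm (a,b,c,d)"
  by (meson norm_fst_le norm_snd_le order_trans)+

lemma norm_quadruple_le_sum:
  fixes a :: "'a::real_normed_vector" and b :: "'b::real_normed_vector"
    and c :: "'c::real_normed_vector" and d :: "'d::real_normed_vector"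
  shows "norm (a,b,c,d) \<le> norm a + norm b + norm c + norm d"
  using norm_Pair_le[of a "(b,c,d)"] norm_Pair_le[of b "(c,d)"] norm_Pair_le[of c d] by linarith

lemma square_le_mult_imp_le:
  fixes q e A :: real
  assumes "0 \<le> q" "0 \<le> e" "0 \<le> A" and sq: "q^2 \<le> A * e * (e + q)"
  shows "q \<le> (A + 1) * e"
proof (rule ccontr)
  assume "\<not> ?thesis"
  then have gt: "(A + 1) * e < q" by simp
  have "0 \<le> (A + 1) * e" using assms by simp
  then have "0 < q" using gt by linarith
  then have "q * ((A + 1) * e) < q * q" using gt by simp
  then have "e * q + A * (e * q) < q * q" by (simp add: algebra_simps)
  moreover have "e * e + A * (e * e) \<le> e * q"
    using mult_left_mono[OF less_imp_le[OF gt] \<open>0 \<le> e\<close>] by (simp add: algebra_simps)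
  moreover have "q * q \<le> A * (e * e) + A * (e * q)"
    using sq by (simp add: power2_eq_square algebra_simps)
  moreover have "0 \<le> e * e" by simp
  ultimately show False by linarith
qed

subsection \<open>A Hoffman error bound on the nonnegative orthant\<close>

definition sign_cone :: "('n \<times> 'm) set \<Rightarrow> ('n \<times> 'm) set \<Rightarrow> (real^'m^'n) set" where
  "sign_cone Z P = {h. \<forall>i j. ((i,j) \<in> Z \<longrightarrow> h$i$j = 0) \<and> ((i,j) \<in> P \<longrightarrow> h$i$j \<ge> 0)
                              \<and> ((i,j) \<notin> P \<longrightarrow> h$i$j \<le> 0)}"

definition conformal_cone :: "real^'m^'n \<Rightarrow> (real^'m^'n) set" where
  "conformal_cone h = sign_cone {(i,j). h$i$j = 0} {(i,j). h$i$j > 0}"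

lemma conformal_cone_iff:
  "v \<in> conformal_cone h \<longleftrightarrow> (\<forall>i j. 0 \<le> v$i$j * h$i$j \<and> (h$i$j = 0 \<longrightarrow> v$i$j = 0))"
proof -
  have "((h = 0 \<longrightarrow> v = 0) \<and> (0 < h \<longrightarrow> 0 \<le> v) \<and> (\<not> 0 < h \<longrightarrow> v \<le> 0)) \<longleftrightarrow>
      0 \<le> v * h \<and> (h = 0 \<longrightarrow> v = 0)" for v h :: real
    by (cases "h > 0") (auto simp: zero_le_mult_iff)
  then show ?thesis unfolding conformal_cone_def sign_cone_def by auto
qed

lemma closed_sign_cone:
  fixes Z P :: "('n::finite \<times> 'm::finite) set"
  shows "closed (sign_cone Z P)"
proof -
  have c: "continuous_on UNIV (\<lambda>h::real^'m^'n. h$i$j)" for i j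
    by (intro continuous_intros)
  have "closed {h::real^'m^'n. (i,j) \<in> Z \<longrightarrow> h$i$j = 0}" for i j
    by (cases "(i,j) \<in> Z") (auto intro: closed_Collect_eq[OF c continuous_on_const])
  moreover have "closed {h::real^'m^'n. (i,j) \<in> P \<longrightarrow> h$i$j \<ge> 0}" for i j
    by (cases "(i,j) \<in> P") (auto intro: closed_Collect_le[OF continuous_on_const c])
  moreover have "closed {h::real^'m^'n. (i,j) \<notin> P \<longrightarrow> h$i$j \<le> 0}" for i j
    by (cases "(i,j) \<in> P") (auto intro: closed_Collect_le[OF c continuous_on_const])
  ultimately show ?thesis
    unfolding sign_cone_def by (intro closed_Collect_all closed_Collect_conj)
qed

lemma cone_sign_cone: "cone (sign_cone Z P)"
  unfolding sign_cone_def cone_def by (auto simp: mult_nonneg_nonpos)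

lemma linear_bounded_below_on_closed_cone:
  fixes M :: "'a::euclidean_space \<Rightarrow> 'b::real_normed_vector"
  assumes lin: "linear M" and "closed C" and "cone C"
    and inj: "\<And>v. v \<in> C \<Longrightarrow> M v = 0 \<Longrightarrow> v = 0"
  shows "\<exists>e>0. \<forall>h\<in>C. e * norm h \<le> norm (M h)"
proof -
  define S where "S = C \<inter> sphere 0 1"
  have "compact S" unfolding S_def using \<open>closed C\<close> by (intro closed_Int_compact compact_sphere)
  have unit: "(1 / norm h) *\<^sub>R h \<in> S" if "h \<in> C" "h \<noteq> 0" for h
    using that \<open>cone C\<close> unfolding S_def cone_def by auto
  have scale: "norm (M h) = norm h * norm (M ((1 / norm h) *\<^sub>R h))" if "h \<noteq> 0" for h
    using that by (simp add: linear_scale[OF lin])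
  show ?thesis
  proof (cases "S = {}")
    case True
    then have "C \<subseteq> {0}" using unit by blast
    then show ?thesis by (intro exI[of _ 1]) auto
  next
    case False
    have "continuous_on S (\<lambda>h. norm (M h))"
      by (intro continuous_intros linear_continuous_on linear_conv_bounded_linear[THEN iffD1] lin)
    then obtain h0 where "h0 \<in> S" and min: "\<And>h. h \<in> S \<Longrightarrow> norm (M h0) \<le> norm (M h)"
      using continuous_attains_inf[OF \<open>compact S\<close> False] by blast
    then have "norm (M h0) > 0" using inj unfolding S_def by fastforce
    moreover have "norm (M h0) * norm h \<le> norm (M h)" if "h \<in> C" for h
    proof (cases "h = 0")
      case False
      then show ?thesis
        using mult_left_mono[OF min[OF unit[OF that False]], of "norm h"] scale[OF False]
        by (simp add: mult.commute)
    qed (simp add: linear_0[OF lin])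
    ultimately show ?thesis by blast
  qed
qed

lemma linear_bounded_below_on_conformal_cones:
  fixes M :: "real^'m^'n \<Rightarrow> 'b::real_normed_vector"
  assumes lin: "linear M"
  shows "\<exists>e>0. \<forall>h. (\<forall>v\<in>conformal_cone h. M v = 0 \<longrightarrow> v = 0) \<longrightarrow> e * norm h \<le> norm (M h)"
proof -
  define good where "good = {(Z,P). \<forall>v\<in>sign_cone Z P. M v = 0 \<longrightarrow> v = 0}"
  define C where "C = \<Union>((\<lambda>(Z,P). sign_cone Z P) ` good)"
  \<comment> \<open>a finite union, since there are only finitely many sign patterns \<open>(Z, P)\<close>\<close>
  have "closed C" unfolding C_def by (intro closed_Union) (auto intro: closed_sign_cone)
  moreover have "cone C" unfolding C_def by (intro cone_Union[rule_format]) (auto intro: cone_sign_cone)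
  moreover have "v = 0" if "v \<in> C" "M v = 0" for v
    using that unfolding C_def good_def by auto
  ultimately obtain e where "e > 0" and e: "\<And>h. h \<in> C \<Longrightarrow> e * norm h \<le> norm (M h)"
    using linear_bounded_below_on_closed_cone[OF lin] by metis
  moreover have "h \<in> C" if "\<forall>v\<in>conformal_cone h. M v = 0 \<longrightarrow> v = 0" for h :: "real^'m^'n"
  proof -
    have "({(i,j). h$i$j = 0}, {(i,j). h$i$j > 0}) \<in> good"
      using that unfolding good_def conformal_cone_def by simp
    moreover have "h \<in> conformal_cone h" unfolding conformal_cone_iff by simp
    ultimately show ?thesis unfolding C_def conformal_cone_def by force
  qed
  ultimately show ?thesis by blast
qed

lemma real_closed_segment_0_iff:
  "(k::real) \<in> closed_segment 0 g \<longleftrightarrow> (0 \<le> k \<and> k \<le> g) \<or> (g \<le> k \<and> k \<le> 0)"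
  by (auto simp: closed_segment_eq_real_ivl)

lemma add_conformal_in_closed_segment_0:
  fixes k g a :: real
  assumes "k \<in> closed_segment 0 g" and "\<bar>a\<bar> \<le> \<bar>g - k\<bar>" and "0 \<le> a * (g - k)"
  shows "k + a \<in> closed_segment 0 g"
proof -
  have "(g - k > 0 \<longrightarrow> a \<ge> 0) \<and> (g - k < 0 \<longrightarrow> a \<le> 0)"
    using assms(3) by (auto simp: zero_le_mult_iff)
  then show ?thesis using assms(1,2) unfolding real_closed_segment_0_iff
    by (auto simp: abs_if split: if_splits)
qed

lemma sgn_diff_in_closed_segment_0:
  fixes k g :: real
  assumes "k \<in> closed_segment 0 g" and "g - k \<noteq> 0"
  shows "sgn (g - k) = sgn g"
  using assms unfolding real_closed_segment_0_iff by (auto simp: sgn_if)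

lemma mult_sgn_eq_abs_if_same_sign:
  fixes v h :: real
  assumes "0 \<le> v * h" and "h \<noteq> 0"
  shows "v * sgn h = \<bar>v\<bar>"
  using assms by (auto simp: sgn_if zero_le_mult_iff)

lemma sum_abs_matrix_entries_pos:
  fixes v :: "real^'m^'n"
  assumes "v \<noteq> 0"
  shows "0 < (\<Sum>i\<in>UNIV. \<Sum>j\<in>UNIV. \<bar>v$i$j\<bar>)"
proof -
  obtain i0 j0 where "v$i0$j0 \<noteq> 0" using assms by (metis vec_eq_iff zero_index)
  then have "0 < (\<Sum>j\<in>UNIV. \<bar>v$i0$j\<bar>)"
    by (intro sum_pos2[where i=j0]) auto
  also have "\<dots> \<le> (\<Sum>i\<in>UNIV. \<Sum>j\<in>UNIV. \<bar>v$i$j\<bar>)"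
    by (intro member_le_sum[of i0 UNIV "\<lambda>i. \<Sum>j\<in>UNIV. \<bar>v$i$j\<bar>"] sum_nonneg) auto
  finally show ?thesis .
qed

lemma conformal_step_in_closed_segments:
  fixes k g v :: "real^'m^'n"
  assumes k: "\<And>i j. k$i$j \<in> closed_segment 0 (g$i$j)" and v: "v \<in> conformal_cone (g - k)"
  obtains \<theta> where "\<theta> > 0" and "\<And>i j. (k + \<theta> *\<^sub>R v)$i$j \<in> closed_segment 0 (g$i$j)"
proof -
  define h where "h = g - k"
  have vh: "0 \<le> v$i$j * h$i$j" and hv: "v$i$j \<noteq> 0 \<Longrightarrow> h$i$j \<noteq> 0" for i j
    using v unfolding h_def conformal_cone_iff by auto
  \<comment> \<open>the largest step along \<open>v\<close> that no entry of \<open>h\<close> changes sign, capped at 1\<close>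
  define T where "T = {\<bar>h$i$j\<bar> / \<bar>v$i$j\<bar> | i j. v$i$j \<noteq> 0}"
  define \<theta> where "\<theta> = Min (insert 1 T)"
  have "finite T"
  proof -
    have "T \<subseteq> (\<lambda>(i,j). \<bar>h$i$j\<bar> / \<bar>v$i$j\<bar>) ` UNIV" unfolding T_def by auto
    then show ?thesis by (rule finite_subset) simp
  qed
  have "\<theta> > 0" unfolding \<theta>_def using \<open>finite T\<close>
    by (subst Min_gr_iff) (auto simp: T_def hv)
  moreover have "(k + \<theta> *\<^sub>R v)$i$j \<in> closed_segment 0 (g$i$j)" for i j
  proof -
    have "\<bar>\<theta> * v$i$j\<bar> \<le> \<bar>h$i$j\<bar>"
    proof (cases "v$i$j = 0")
      case False
      have "\<theta> \<le> \<bar>h$i$j\<bar> / \<bar>v$i$j\<bar>" unfolding \<theta>_def using \<open>finite T\<close> False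
        by (intro Min_le) (auto simp: T_def)
      then show ?thesis using False \<open>\<theta> > 0\<close> by (simp add: field_simps abs_mult)
    qed simp
    moreover have "0 \<le> (\<theta> * v$i$j) * h$i$j"
      using vh[of i j] \<open>\<theta> > 0\<close> by (simp add: mult.assoc)
    ultimately show ?thesis
      using add_conformal_in_closed_segment_0[OF k[of i j]] unfolding h_def by simp
  qed
  ultimately show ?thesis using that by blast
qed

lemma exists_kernel_shift_injective_on_conformal_cone:
  fixes M :: "real^'m^'n \<Rightarrow> 'b::real_normed_vector"
  assumes lin: "linear M"
  obtains k where "M k = 0" and "\<And>i j. k$i$j \<in> closed_segment 0 (g$i$j)"
    and "\<And>v. v \<in> conformal_cone (g - k) \<Longrightarrow> M v = 0 \<Longrightarrow> v = 0"
proof -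
  define K where "K = {k. M k = 0 \<and> (\<forall>i j. k$i$j \<in> closed_segment 0 (g$i$j))}"
  \<comment> \<open>on \<open>K\<close>, \<open>f k\<close> is the \<open>\<ell>\<^sub>1\<close> norm of \<open>k\<close>; a maximiser leaves no kernel direction conformal to \<open>g - k\<close>\<close>
  define f where "f k = (\<Sum>i\<in>UNIV. \<Sum>j\<in>UNIV. k$i$j * sgn (g$i$j))" for k :: "real^'m^'n"
  have "closed K"
  proof -
    have "continuous_on UNIV M" using lin by (intro linear_continuous_on linear_conv_bounded_linear[THEN iffD1])
    moreover have "continuous_on UNIV (\<lambda>k::real^'m^'n. k$i$j)" for i j by (intro continuous_intros)
    ultimately show ?thesis unfolding K_def real_closed_segment_0_iff
      by (intro closed_Collect_conj closed_Collect_all closed_Collect_disj closed_Collect_eq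
          closed_Collect_le continuous_on_const)
  qed
  moreover have "bounded K"
  proof -
    have "norm k \<le> CARD('n) * (CARD('m) * norm g)" if "k \<in> K" for k
    proof (rule norm_matrix_le_card_mult_entry_bound)
      fix i j
      have "k$i$j \<in> closed_segment 0 (g$i$j)" using that unfolding K_def by blast
      then have "\<bar>k$i$j\<bar> \<le> \<bar>g$i$j\<bar>" unfolding real_closed_segment_0_iff by auto
      then show "\<bar>k$i$j\<bar> \<le> norm g" using abs_matrix_entry_le_norm[of g i j] by linarith
    qed
    then show ?thesis unfolding bounded_iff by blast
  qed
  ultimately have "compact K" by (simp add: compact_eq_bounded_closed)
  moreover have "0 \<in> K" unfolding K_def using linear_0[OF lin] by simp
  moreover have "continuous_on K f" unfolding f_def by (intro continuous_intros)
  ultimately obtain k where "k \<in> K" and kmax: "\<And>k'. k' \<in> K \<Longrightarrow> f k' \<le> f k"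
    using continuous_attains_sup[of K f] by blast
  then have Mk: "M k = 0" and k: "\<And>i j. k$i$j \<in> closed_segment 0 (g$i$j)"
    unfolding K_def by auto
  have "v = 0" if v: "v \<in> conformal_cone (g - k)" and Mv: "M v = 0" for v
  proof (rule ccontr)
    assume "v \<noteq> 0"
    obtain \<theta> where "\<theta> > 0" and \<theta>: "\<And>i j. (k + \<theta> *\<^sub>R v)$i$j \<in> closed_segment 0 (g$i$j)"
      using conformal_step_in_closed_segments[OF k v] by blast
    have "k + \<theta> *\<^sub>R v \<in> K"
      unfolding K_def using \<theta> Mk Mv linear_add[OF lin] linear_scale[OF lin] by simp
    have sgn: "v$i$j * sgn (g$i$j) = \<bar>v$i$j\<bar>" for i j
    proof (cases "(g - k)$i$j = 0")
      case True
      then show ?thesis using v unfolding conformal_cone_iff by simp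
    next
      case False
      have "0 \<le> v$i$j * (g - k)$i$j" using v unfolding conformal_cone_iff by blast
      then have "v$i$j * sgn ((g - k)$i$j) = \<bar>v$i$j\<bar>"
        using False by (rule mult_sgn_eq_abs_if_same_sign)
      then show ?thesis using sgn_diff_in_closed_segment_0[OF k[of i j]] False by simp
    qed
    have pos: "0 < (\<Sum>i\<in>UNIV. \<Sum>j\<in>UNIV. v$i$j * sgn (g$i$j))"
      using sum_abs_matrix_entries_pos[OF \<open>v \<noteq> 0\<close>] by (simp add: sgn)
    have "f (k + \<theta> *\<^sub>R v) = f k + \<theta> * (\<Sum>i\<in>UNIV. \<Sum>j\<in>UNIV. v$i$j * sgn (g$i$j))"
      unfolding f_def by (simp add: algebra_simps sum.distrib sum_distrib_left)
    then show False
      using kmax[OF \<open>k + \<theta> *\<^sub>R v \<in> K\<close>] mult_pos_pos[OF \<open>\<theta> > 0\<close> pos] by linarith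
  qed
  with Mk k show ?thesis using that by blast
qed

lemma hoffman_bound_nonneg_matrices:
  fixes M :: "real^'m^'n \<Rightarrow> 'b::real_normed_vector"
  assumes lin: "linear M"
  shows "\<exists>\<kappa>>0. \<forall>x x0. (\<forall>i j. 0 \<le> x$i$j) \<longrightarrow> (\<forall>i j. 0 \<le> x0$i$j) \<longrightarrow>
           (\<exists>x'. (\<forall>i j. 0 \<le> x'$i$j) \<and> M x' = M x0 \<and> norm (x - x') \<le> \<kappa> * norm (M x - M x0))"
proof -
  obtain e where "e > 0"
    and e: "\<And>h. \<forall>v\<in>conformal_cone h. M v = 0 \<longrightarrow> v = 0 \<Longrightarrow> e * norm h \<le> norm (M h)"
    using linear_bounded_below_on_conformal_cones[OF lin] by blast
  have "\<exists>x'. (\<forall>i j. 0 \<le> x'$i$j) \<and> M x' = M x0 \<and> norm (x - x') \<le> 1 / e * norm (M x - M x0)"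
    if x: "\<forall>i j. 0 \<le> x$i$j" and x0: "\<forall>i j. 0 \<le> x0$i$j" for x x0 :: "real^'m^'n"
  proof -
    obtain k where Mk: "M k = 0" and k: "\<And>i j. k$i$j \<in> closed_segment 0 ((x0 - x)$i$j)"
      and inj: "\<And>v. v \<in> conformal_cone (x0 - x - k) \<Longrightarrow> M v = 0 \<Longrightarrow> v = 0"
      using exists_kernel_shift_injective_on_conformal_cone[OF lin] by blast
    \<comment> \<open>\<open>x + h\<close> lies entrywise between \<open>x\<close> and \<open>x\<^sub>0\<close>, and \<open>M\<close> is injective on the cone conformal to \<open>h\<close>\<close>
    define h where "h = x0 - x - k"
    have Mh: "M h = M x0 - M x" unfolding h_def using Mk by (simp add: linear_diff[OF lin])
    have "0 \<le> (x + h)$i$j" for i j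
    proof -
      have "0 \<le> x$i$j" "0 \<le> x0$i$j" using x x0 by auto
      then show ?thesis using k[of i j] unfolding h_def real_closed_segment_0_iff by auto
    qed
    moreover have "M (x + h) = M x0" using Mh by (simp add: linear_add[OF lin])
    moreover have "e * norm h \<le> norm (M x - M x0)"
      using e[of h] inj Mh unfolding h_def by (auto simp: norm_minus_commute)
    then have "norm (x - (x + h)) \<le> 1 / e * norm (M x - M x0)"
      using \<open>e > 0\<close> by (simp add: field_simps)
    ultimately show ?thesis by blast
  qed
  then show ?thesis using \<open>e > 0\<close> by (intro exI[of _ "1 / e"]) auto
qed

subsection \<open>The KKT system and its residual\<close>

lemma KKT_setD:
  assumes "(x, t, p, y) \<in> KKT_set w U"
  shows "t$i * y$i = w$i" and "x$i$j * (p$j - U$i$j * y$i) = 0" and "0 \<le> p$j - U$i$j * y$i"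
    and "(\<Sum>i\<in>UNIV. x$i$j) = 1" and "t$i = (\<Sum>j\<in>UNIV. U$i$j * x$i$j)" and "0 \<le> x$i$j"
  using assms unfolding KKT_set_def by auto

lemma KKT_setI:
  assumes "\<And>i. t$i * y$i = w$i" and "\<And>i j. x$i$j * (p$j - U$i$j * y$i) = 0"
    and "\<And>i j. 0 \<le> p$j - U$i$j * y$i" and "\<And>j. (\<Sum>i\<in>UNIV. x$i$j) = 1"
    and "\<And>i. t$i = (\<Sum>j\<in>UNIV. U$i$j * x$i$j)" and "\<And>i j. 0 \<le> x$i$j"
  shows "(x, t, p, y) \<in> KKT_set w U"
  using assms unfolding KKT_set_def by auto

lemma prox_residual_eq_min: "a - pos_part (a - s / \<xi>) = min a (s / \<xi>)"
  by (simp add: pos_part_def)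

lemma F_res_component_bounds:
  fixes x U :: "real^'m^'n" and t y w :: "real^'n" and p :: "real^'m" and \<xi> :: real
  defines "\<epsilon> \<equiv> norm (F_res \<xi> w U (x, t, p, y))"
  shows "\<bar>t$i * y$i - w$i\<bar> \<le> \<epsilon>"
    and "\<bar>min (x$i$j) ((p$j - U$i$j * y$i) / \<xi>)\<bar> \<le> \<epsilon>"
    and "- \<epsilon> \<le> p$j - U$i$j * y$i"
    and "\<bar>(\<Sum>i\<in>UNIV. x$i$j) - 1\<bar> \<le> \<epsilon>"
    and "\<bar>t$i - (\<Sum>j\<in>UNIV. U$i$j * x$i$j)\<bar> \<le> \<epsilon>"
proof -
  define A where "A = (\<chi> i. t$i * y$i - w$i)"
  define B where "B = (\<chi> i j. min (x$i$j) ((p$j - U$i$j * y$i) / \<xi>))"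
  define C where "C = (\<chi> i j. neg_part (p$j - U$i$j * y$i))"
  define D where "D = (\<chi> j. (\<Sum>i\<in>UNIV. x$i$j) - 1)"
  define E where "E = (\<chi> i. t$i - (\<Sum>j\<in>UNIV. U$i$j * x$i$j))"
  have F: "\<epsilon> = norm (A, B, C, D, E)"
    unfolding \<epsilon>_def F_res_def A_def B_def C_def D_def E_def by (simp add: prox_residual_eq_min)
  have "norm A \<le> \<epsilon>" "norm B \<le> \<epsilon>" "norm C \<le> \<epsilon>" "norm D \<le> \<epsilon>" "norm E \<le> \<epsilon>"
    unfolding F by (meson norm_fst_le norm_snd_le order_trans)+
  then show "\<bar>t$i * y$i - w$i\<bar> \<le> \<epsilon>"
    and "\<bar>min (x$i$j) ((p$j - U$i$j * y$i) / \<xi>)\<bar> \<le> \<epsilon>"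
    and "- \<epsilon> \<le> p$j - U$i$j * y$i"
    and "\<bar>(\<Sum>i\<in>UNIV. x$i$j) - 1\<bar> \<le> \<epsilon>"
    and "\<bar>t$i - (\<Sum>j\<in>UNIV. U$i$j * x$i$j)\<bar> \<le> \<epsilon>"
    using component_le_norm_cart[of A i] abs_matrix_entry_le_norm[of B i j]
      abs_matrix_entry_le_norm[of C i j] component_le_norm_cart[of D j] component_le_norm_cart[of E i]
    unfolding A_def B_def C_def D_def E_def by (auto simp: neg_part_def)
qed

lemma complementarity_product_bound:
  fixes a a' s s' \<xi> :: real
  assumes "\<xi> > 0" and "0 \<le> a" and "0 \<le> a'" and "0 \<le> s'" and "a' * s' = 0"
  shows "(a - a') * (s - s') \<le> \<bar>min a (s / \<xi>)\<bar> * (\<bar>s - s'\<bar> + \<xi> * \<bar>a - a'\<bar>)"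
proof (cases "a \<le> s / \<xi>")
  case True
  then have "0 \<le> s / \<xi>" using assms(2) by linarith
  then have "0 \<le> s" using assms(1) by (simp add: zero_le_divide_iff)
  have "(a - a') * (s - s') = a * (s - s') - a' * s" using assms(5) by (simp add: algebra_simps)
  also have "\<dots> \<le> a * (s - s')" using \<open>0 \<le> s\<close> assms(3) by simp
  also have "\<dots> \<le> \<bar>min a (s / \<xi>)\<bar> * \<bar>s - s'\<bar>" using True assms(2) by (simp add: mult_left_mono)
  also have "\<dots> \<le> \<bar>min a (s / \<xi>)\<bar> * (\<bar>s - s'\<bar> + \<xi> * \<bar>a - a'\<bar>)"
    using assms(1) by (intro mult_left_mono) auto
  finally show ?thesis .
next
  case False
  have "(a - a') * (s - s') = (a - a') * s - a * s'" using assms(5) by (simp add: algebra_simps)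
  also have "\<dots> \<le> (a - a') * s" using assms(2,4) by simp
  also have "\<dots> \<le> \<bar>(a - a') * s\<bar>" by (rule abs_ge_self)
  also have "\<dots> = \<bar>min a (s / \<xi>)\<bar> * (\<xi> * \<bar>a - a'\<bar>)"
    using False assms(1) by (simp add: abs_mult)
  also have "\<dots> \<le> \<bar>min a (s / \<xi>)\<bar> * (\<bar>s - s'\<bar> + \<xi> * \<bar>a - a'\<bar>)"
    by (intro mult_left_mono) auto
  finally show ?thesis .
qed

text \<open>Pairing the residual of \<open>z = (x, t, p, y)\<close> with \<open>z - z'\<close> for a KKT point \<open>z'\<close>;
  the left-hand side is what the strict monotonicity of the budget equations contributes.\<close>

lemma KKT_monotonicity_identity:
  fixes x x' U :: "real^'m^'n" and t t' y y' w :: "real^'n" and p p' :: "real^'m"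
  assumes kkt: "(x', t', p', y') \<in> KKT_set w U" and y: "\<And>i. 0 < y$i" and y': "\<And>i. 0 < y'$i"
  shows "(\<Sum>i\<in>UNIV. w$i * (y$i - y'$i)^2 / (y$i * y'$i)) =
      (\<Sum>i\<in>UNIV. (t$i * y$i - w$i) * (y$i - y'$i) / y$i)
    - (\<Sum>i\<in>UNIV. (y$i - y'$i) * (t$i - (\<Sum>j\<in>UNIV. U$i$j * x$i$j)))
    - (\<Sum>j\<in>UNIV. (p$j - p'$j) * ((\<Sum>i\<in>UNIV. x$i$j) - 1))
    + (\<Sum>i\<in>UNIV. \<Sum>j\<in>UNIV. (x$i$j - x'$i$j) * ((p$j - U$i$j * y$i) - (p'$j - U$i$j * y'$i)))"
proof -
  have prod: "(\<Sum>i\<in>UNIV. \<Sum>j\<in>UNIV. (x$i$j - x'$i$j) * ((p$j - U$i$j * y$i) - (p'$j - U$i$j * y'$i)))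
      = (\<Sum>j\<in>UNIV. (p$j - p'$j) * ((\<Sum>i\<in>UNIV. x$i$j) - (\<Sum>i\<in>UNIV. x'$i$j)))
      - (\<Sum>i\<in>UNIV. (y$i - y'$i) * ((\<Sum>j\<in>UNIV. U$i$j * x$i$j) - (\<Sum>j\<in>UNIV. U$i$j * x'$i$j)))"
  proof -
    have "(x$i$j - x'$i$j) * ((p$j - U$i$j * y$i) - (p'$j - U$i$j * y'$i))
        = (p$j - p'$j) * (x$i$j - x'$i$j) - (y$i - y'$i) * (U$i$j * x$i$j - U$i$j * x'$i$j)" for i j
      by (simp add: algebra_simps)
    then have "(\<Sum>i\<in>UNIV. \<Sum>j\<in>UNIV. (x$i$j - x'$i$j) * ((p$j - U$i$j * y$i) - (p'$j - U$i$j * y'$i)))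
        = (\<Sum>i\<in>UNIV. \<Sum>j\<in>UNIV. (p$j - p'$j) * (x$i$j - x'$i$j))
        - (\<Sum>i\<in>UNIV. \<Sum>j\<in>UNIV. (y$i - y'$i) * (U$i$j * x$i$j - U$i$j * x'$i$j))"
      by (simp add: sum_subtractf)
    also have "(\<Sum>i\<in>UNIV. \<Sum>j\<in>UNIV. (p$j - p'$j) * (x$i$j - x'$i$j))
        = (\<Sum>j\<in>UNIV. (p$j - p'$j) * ((\<Sum>i\<in>UNIV. x$i$j) - (\<Sum>i\<in>UNIV. x'$i$j)))"
      by (subst sum.swap) (simp add: right_diff_distrib sum_distrib_left sum_subtractf)
    also have "(\<Sum>i\<in>UNIV. \<Sum>j\<in>UNIV. (y$i - y'$i) * (U$i$j * x$i$j - U$i$j * x'$i$j))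
        = (\<Sum>i\<in>UNIV. (y$i - y'$i) * ((\<Sum>j\<in>UNIV. U$i$j * x$i$j) - (\<Sum>j\<in>UNIV. U$i$j * x'$i$j)))"
      by (simp add: right_diff_distrib sum_distrib_left sum_subtractf)
    finally show ?thesis .
  qed
  have budget: "w$i * (y$i - y'$i)^2 / (y$i * y'$i)
      = (t$i * y$i - w$i) * (y$i - y'$i) / y$i - (y$i - y'$i) * (t$i - t'$i)" for i
  proof -
    have "t'$i = w$i / y'$i" using KKT_setD(1)[OF kkt, of i] y'[of i] by (simp add: field_simps)
    then show ?thesis using y[of i] y'[of i] by (simp add: field_simps power2_eq_square)
  qed
  have "(\<Sum>i\<in>UNIV. (y$i - y'$i) * (t$i - t'$i))
      = (\<Sum>i\<in>UNIV. (y$i - y'$i) * (t$i - (\<Sum>j\<in>UNIV. U$i$j * x$i$j)))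
      + (\<Sum>i\<in>UNIV. (y$i - y'$i) * ((\<Sum>j\<in>UNIV. U$i$j * x$i$j) - (\<Sum>j\<in>UNIV. U$i$j * x'$i$j)))"
    using KKT_setD(5)[OF kkt] by (simp add: algebra_simps sum.distrib[symmetric])
  moreover have "(\<Sum>j\<in>UNIV. (p$j - p'$j) * ((\<Sum>i\<in>UNIV. x$i$j) - (\<Sum>i\<in>UNIV. x'$i$j)))
      = (\<Sum>j\<in>UNIV. (p$j - p'$j) * ((\<Sum>i\<in>UNIV. x$i$j) - 1))"
    using KKT_setD(4)[OF kkt] by simp
  ultimately show ?thesis unfolding budget prod by (simp add: sum_subtractf)
qed

lemma KKT_monotonicity_bound:
  fixes x x' U :: "real^'m^'n" and t t' y y' w :: "real^'n" and p p' :: "real^'m"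
  assumes "\<xi> > 0" and kkt: "(x', t', p', y') \<in> KKT_set w U"
    and y: "\<And>i. 0 < y$i" and y': "\<And>i. 0 < y'$i" and x: "\<And>i j. 0 \<le> x$i$j"
    and budget: "\<And>i. \<bar>t$i * y$i - w$i\<bar> \<le> \<epsilon>"
    and compl: "\<And>i j. \<bar>min (x$i$j) ((p$j - U$i$j * y$i) / \<xi>)\<bar> \<le> \<epsilon>"
    and market: "\<And>j. \<bar>(\<Sum>i\<in>UNIV. x$i$j) - 1\<bar> \<le> \<epsilon>"
    and utility: "\<And>i. \<bar>t$i - (\<Sum>j\<in>UNIV. U$i$j * x$i$j)\<bar> \<le> \<epsilon>"
  shows "(\<Sum>i\<in>UNIV. w$i * (y$i - y'$i)^2 / (y$i * y'$i)) \<le>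
     \<epsilon> * ((\<Sum>i\<in>UNIV. \<bar>y$i - y'$i\<bar> / y$i) + (\<Sum>j\<in>UNIV. \<bar>p$j - p'$j\<bar>) + (\<Sum>i\<in>UNIV. \<bar>y$i - y'$i\<bar>)
        + (\<Sum>i\<in>UNIV. \<Sum>j\<in>UNIV. \<bar>(p$j - p'$j) - U$i$j * (y$i - y'$i)\<bar> + \<xi> * \<bar>x$i$j - x'$i$j\<bar>))"
proof -
  have B1: "(\<Sum>i\<in>UNIV. (t$i * y$i - w$i) * (y$i - y'$i) / y$i) \<le> \<epsilon> * (\<Sum>i\<in>UNIV. \<bar>y$i - y'$i\<bar> / y$i)"
    unfolding sum_distrib_left
  proof (rule sum_mono)
    fix i
    have "(t$i * y$i - w$i) * (y$i - y'$i) / y$i \<le> \<bar>t$i * y$i - w$i\<bar> * \<bar>y$i - y'$i\<bar> / y$i"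
      using y[of i] by (intro divide_right_mono) (auto simp: abs_mult[symmetric])
    also have "\<dots> \<le> \<epsilon> * \<bar>y$i - y'$i\<bar> / y$i"
      using y[of i] budget[of i] by (intro divide_right_mono mult_right_mono) auto
    finally show "(t$i * y$i - w$i) * (y$i - y'$i) / y$i \<le> \<epsilon> * (\<bar>y$i - y'$i\<bar> / y$i)" by simp
  qed
  have B2: "- (\<Sum>i\<in>UNIV. (y$i - y'$i) * (t$i - (\<Sum>j\<in>UNIV. U$i$j * x$i$j))) \<le> \<epsilon> * (\<Sum>i\<in>UNIV. \<bar>y$i - y'$i\<bar>)"
    unfolding sum_distrib_left sum_negf[symmetric]
  proof (rule sum_mono)
    fix i
    have "- ((y$i - y'$i) * (t$i - (\<Sum>j\<in>UNIV. U$i$j * x$i$j)))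
        \<le> \<bar>y$i - y'$i\<bar> * \<bar>t$i - (\<Sum>j\<in>UNIV. U$i$j * x$i$j)\<bar>"
      by (simp add: abs_mult[symmetric])
    also have "\<dots> \<le> \<bar>y$i - y'$i\<bar> * \<epsilon>" using utility by (intro mult_left_mono) auto
    finally show "- ((y$i - y'$i) * (t$i - (\<Sum>j\<in>UNIV. U$i$j * x$i$j))) \<le> \<epsilon> * \<bar>y$i - y'$i\<bar>"
      by (simp add: mult.commute)
  qed
  have B3: "- (\<Sum>j\<in>UNIV. (p$j - p'$j) * ((\<Sum>i\<in>UNIV. x$i$j) - 1)) \<le> \<epsilon> * (\<Sum>j\<in>UNIV. \<bar>p$j - p'$j\<bar>)"
    unfolding sum_distrib_left sum_negf[symmetric]
  proof (rule sum_mono)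
    fix j
    have "- ((p$j - p'$j) * ((\<Sum>i\<in>UNIV. x$i$j) - 1)) \<le> \<bar>p$j - p'$j\<bar> * \<bar>(\<Sum>i\<in>UNIV. x$i$j) - 1\<bar>"
      by (simp add: abs_mult[symmetric])
    also have "\<dots> \<le> \<bar>p$j - p'$j\<bar> * \<epsilon>" using market by (intro mult_left_mono) auto
    finally show "- ((p$j - p'$j) * ((\<Sum>i\<in>UNIV. x$i$j) - 1)) \<le> \<epsilon> * \<bar>p$j - p'$j\<bar>"
      by (simp add: mult.commute)
  qed
  have B4: "(\<Sum>i\<in>UNIV. \<Sum>j\<in>UNIV. (x$i$j - x'$i$j) * ((p$j - U$i$j * y$i) - (p'$j - U$i$j * y'$i)))
      \<le> \<epsilon> * (\<Sum>i\<in>UNIV. \<Sum>j\<in>UNIV. \<bar>(p$j - p'$j) - U$i$j * (y$i - y'$i)\<bar> + \<xi> * \<bar>x$i$j - x'$i$j\<bar>)"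
    unfolding sum_distrib_left
  proof (intro sum_mono)
    fix i j
    have "(x$i$j - x'$i$j) * ((p$j - U$i$j * y$i) - (p'$j - U$i$j * y'$i))
        \<le> \<bar>min (x$i$j) ((p$j - U$i$j * y$i) / \<xi>)\<bar>
          * (\<bar>(p$j - U$i$j * y$i) - (p'$j - U$i$j * y'$i)\<bar> + \<xi> * \<bar>x$i$j - x'$i$j\<bar>)"
      using KKT_setD(2,3,6)[OF kkt] by (intro complementarity_product_bound \<open>\<xi> > 0\<close> x)
    also have "\<dots> \<le> \<epsilon> * (\<bar>(p$j - U$i$j * y$i) - (p'$j - U$i$j * y'$i)\<bar> + \<xi> * \<bar>x$i$j - x'$i$j\<bar>)"
      using compl \<open>\<xi> > 0\<close> by (intro mult_right_mono) auto
    moreover have "(p$j - U$i$j * y$i) - (p'$j - U$i$j * y'$i) = (p$j - p'$j) - U$i$j * (y$i - y'$i)"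
      by (simp add: algebra_simps)
    ultimately show "(x$i$j - x'$i$j) * ((p$j - U$i$j * y$i) - (p'$j - U$i$j * y'$i))
        \<le> \<epsilon> * (\<bar>(p$j - p'$j) - U$i$j * (y$i - y'$i)\<bar> + \<xi> * \<bar>x$i$j - x'$i$j\<bar>)"
      by (simp only:)
  qed
  show ?thesis
    unfolding KKT_monotonicity_identity[OF kkt y y', where x=x and t=t and p=p]
    using B1 B2 B3 B4 by (simp only: distrib_left)
qed

subsection \<open>Points with small residual near a fixed KKT point\<close>

definition allocation_map ::
    "real^'m^'n \<Rightarrow> ('n \<Rightarrow> 'm \<Rightarrow> bool) \<Rightarrow> real^'m^'n \<Rightarrow> (real^'m) \<times> (real^'n) \<times> (real^'m^'n)" where
  "allocation_map U S x =
     ((\<chi> j. \<Sum>i\<in>UNIV. x$i$j), (\<chi> i. \<Sum>j\<in>UNIV. U$i$j * x$i$j), (\<chi> i j. if S i j then x$i$j else 0))"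

lemma linear_allocation_map: "linear (allocation_map U S)"
  unfolding allocation_map_def
  by (rule linearI) (auto simp: vec_eq_iff sum.distrib sum_distrib_left algebra_simps)

locale fisher_KKT_point =
  fixes w :: "real^'n" and U :: "real^'m^'n" and \<xi> R :: real
    and x0 :: "real^'m^'n" and t0 :: "real^'n" and p0 :: "real^'m" and y0 :: "real^'n"
  assumes xi_pos: "0 < \<xi>" and R_pos: "0 < R" and w_pos: "\<And>i. 0 < w$i"
    and U_nonneg: "\<And>i j. 0 \<le> U$i$j"
    and KKT: "(x0, t0, p0, y0) \<in> KKT_set w U"
begin

lemma y0_pos: "0 < y0$i"
proof -
  have "0 \<le> t0$i" using KKT_setD(5,6)[OF KKT] U_nonneg by (simp add: sum_nonneg)
  moreover have "0 < t0$i * y0$i" using KKT_setD(1)[OF KKT] w_pos by simp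
  ultimately show ?thesis by (simp add: zero_less_mult_iff)
qed

lemma norm_y0_pos: "0 < norm y0"
  using y0_pos component_le_norm_cart by (metis abs_of_pos less_le_trans)

lemma exists_buyer: "\<exists>i. 0 < x0$i$j"
proof (rule ccontr)
  assume "\<not> ?thesis"
  then have "(\<Sum>i\<in>UNIV. x0$i$j) \<le> 0" by (simp add: sum_nonpos not_less)
  then show False using KKT_setD(4)[OF KKT] by simp
qed

lemma x0_eq_0_if_slack: "0 < p0$j - U$i$j * y0$i \<Longrightarrow> x0$i$j = 0"
  using KKT_setD(2)[OF KKT, of i j] by simp

definition w_min :: real where "w_min = Min (range (\<lambda>i. w$i))"

lemma w_min_pos: "0 < w_min" and w_min_le: "w_min \<le> w$i"
  unfolding w_min_def using w_pos by auto

definition y_lb :: real where "y_lb = w_min / (2 * R)"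

lemma y_lb_pos: "0 < y_lb"
  unfolding y_lb_def using w_min_pos R_pos by simp

definition U_bound :: real where "U_bound = norm U + 1"

lemma U_bound_pos: "0 < U_bound" and abs_U_le: "\<bar>U$i$j\<bar> \<le> U_bound"
  unfolding U_bound_def using abs_matrix_entry_le_norm[of U i j] norm_ge_zero[of U] by linarith+

definition slack_min :: real where
  "slack_min = Min (insert 1 {p0$j - U$i$j * y0$i | i j. 0 < p0$j - U$i$j * y0$i})"

lemma slack_min_pos: "0 < slack_min"
  and slack_min_le: "0 < p0$j - U$i$j * y0$i \<Longrightarrow> slack_min \<le> p0$j - U$i$j * y0$i"
proof -
  have "{p0$j - U$i$j * y0$i | i j. 0 < p0$j - U$i$j * y0$i} \<subseteq> (\<lambda>(i,j). p0$j - U$i$j * y0$i) ` UNIV"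
    by auto
  then have fin: "finite {p0$j - U$i$j * y0$i | i j. 0 < p0$j - U$i$j * y0$i}"
    by (rule finite_subset) simp
  show "0 < slack_min" unfolding slack_min_def using fin by (subst Min_gr_iff) auto
  show "slack_min \<le> p0$j - U$i$j * y0$i" if "0 < p0$j - U$i$j * y0$i"
    unfolding slack_min_def using fin that by (intro Min_le) auto
qed

abbreviation support_map :: "real^'m^'n \<Rightarrow> (real^'m) \<times> (real^'n) \<times> (real^'m^'n)" where
  "support_map \<equiv> allocation_map U (\<lambda>i j. 0 < p0$j - U$i$j * y0$i)"

definition hoffman_const :: real where
  "hoffman_const = (SOME \<kappa>. 0 < \<kappa> \<and> (\<forall>x x'. (\<forall>i j. 0 \<le> x$i$j) \<longrightarrow> (\<forall>i j. 0 \<le> x'$i$j) \<longrightarrow>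
     (\<exists>x''. (\<forall>i j. 0 \<le> x''$i$j) \<and> support_map x'' = support_map x'
            \<and> norm (x - x'') \<le> \<kappa> * norm (support_map x - support_map x'))))"

lemma hoffman_const_pos: "0 < hoffman_const"
  and hoffman_projection: "(\<And>i j. 0 \<le> x$i$j) \<Longrightarrow> \<exists>x'. (\<forall>i j. 0 \<le> x'$i$j)
     \<and> support_map x' = support_map x0 \<and> norm (x - x') \<le> hoffman_const * norm (support_map x - support_map x0)"
proof -
  have "0 < hoffman_const \<and> (\<forall>x x'. (\<forall>i j. 0 \<le> x$i$j) \<longrightarrow> (\<forall>i j. 0 \<le> x'$i$j) \<longrightarrow>
     (\<exists>x''. (\<forall>i j. 0 \<le> x''$i$j) \<and> support_map x'' = support_map x'
            \<and> norm (x - x'') \<le> hoffman_const * norm (support_map x - support_map x')))"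
    unfolding hoffman_const_def
    by (rule someI_ex) (rule hoffman_bound_nonneg_matrices[OF linear_allocation_map])
  then show "0 < hoffman_const" and "(\<And>i j. 0 \<le> x$i$j) \<Longrightarrow> \<exists>x'. (\<forall>i j. 0 \<le> x'$i$j)
     \<and> support_map x' = support_map x0 \<and> norm (x - x') \<le> hoffman_const * norm (support_map x - support_map x0)"
    using KKT_setD(6)[OF KKT] by blast+
qed

definition mono_const :: real where
  "mono_const = R * norm y0 / w_min
     * (CARD('n) / y_lb + CARD('m) + CARD('n) + CARD('n) * CARD('m) * (1 + U_bound + \<xi>))"

lemma mono_const_nonneg: "0 \<le> mono_const"
  unfolding mono_const_def using R_pos w_min_pos y_lb_pos U_bound_pos xi_pos by simp

text \<open>One bound per use: \<open>t, y\<close> bounded below (first two), a buyer with share above \<open>\<epsilon>\<close>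
  for every good, and the positive slacks of \<open>z\<^sub>0\<close> surviving the perturbation (last two).\<close>

definition eps_threshold :: real where
  "eps_threshold = min (min (w_min / 2) (w_min / (4 * R)))
     (min (1 / (4 * CARD('n))) (min (slack_min / (2 * (2 * \<xi> + 1)))
        ((slack_min / (4 * U_bound))^2 / (2 * (mono_const * (R + norm (x0, t0, p0, y0)) + 1)))))"

lemma eps_threshold_pos: "0 < eps_threshold"
proof -
  have "0 \<le> mono_const * (R + norm (x0, t0, p0, y0))"
    using mono_const_nonneg R_pos by simp
  then show ?thesis
    unfolding eps_threshold_def using w_min_pos R_pos slack_min_pos U_bound_pos xi_pos by simp
qed

definition dist_const :: real where
  "dist_const = hoffman_const * (CARD('m) + CARD('n) + CARD('n) / y_lb + CARD('n) * CARD('m))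
     + CARD('n) / y_lb + CARD('m) * (\<xi> + 1)
     + (hoffman_const * CARD('n) * norm t0 / y_lb + CARD('n) * norm t0 / y_lb + CARD('m) * U_bound + 1)"

lemma dist_const_nonneg: "0 \<le> dist_const"
  unfolding dist_const_def using hoffman_const_pos y_lb_pos xi_pos U_bound_pos by simp

end

locale fisher_near_point = fisher_KKT_point w U \<xi> R x0 t0 p0 y0
  for w :: "real^'n" and U :: "real^'m^'n" and \<xi> R :: real
    and x0 :: "real^'m^'n" and t0 :: "real^'n" and p0 :: "real^'m" and y0 :: "real^'n" +
  fixes x :: "real^'m^'n" and t :: "real^'n" and p :: "real^'m" and y :: "real^'n"
  assumes x_nonneg: "\<And>i j. 0 \<le> x$i$j" and norm_le_R: "norm (x, t, p, y) \<le> R"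
    and residual_le: "norm (F_res \<xi> w U (x, t, p, y)) \<le> eps_threshold"
begin

abbreviation residual :: real where "residual \<equiv> norm (F_res \<xi> w U (x, t, p, y))"

abbreviation y_gap :: real where "y_gap \<equiv> norm (y - y0)"

lemma residual_bounds:
  "\<bar>t$i * y$i - w$i\<bar> \<le> residual" "\<bar>min (x$i$j) ((p$j - U$i$j * y$i) / \<xi>)\<bar> \<le> residual"
  "- residual \<le> p$j - U$i$j * y$i" "\<bar>(\<Sum>i\<in>UNIV. x$i$j) - 1\<bar> \<le> residual"
  "\<bar>t$i - (\<Sum>j\<in>UNIV. U$i$j * x$i$j)\<bar> \<le> residual"
  by (fact F_res_component_bounds)+

lemma residual_small:
  "residual \<le> w_min / 2" "residual \<le> w_min / (4 * R)" "residual \<le> 1 / (4 * CARD('n))"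
  "residual \<le> slack_min / (2 * (2 * \<xi> + 1))"
  "residual \<le> (slack_min / (4 * U_bound))^2 / (2 * (mono_const * (R + norm (x0, t0, p0, y0)) + 1))"
  using residual_le unfolding eps_threshold_def by auto

lemma abs_t_le_R: "\<bar>t$i\<bar> \<le> R" and abs_y_le_R: "\<bar>y$i\<bar> \<le> R"
  using component_le_norm_cart[of t i] component_le_norm_cart[of y i]
    norm_le_norm_quadruple(2,4)[where a=x and b=t and c=p and d=y] norm_le_R by linarith+

lemma y_lb_le: "y_lb \<le> y$i"
proof -
  have "0 \<le> (\<Sum>j\<in>UNIV. U$i$j * x$i$j)" using U_nonneg x_nonneg by (simp add: sum_nonneg)
  then have t_ge: "- residual \<le> t$i" using residual_bounds(5)[of i] by (simp add: abs_le_iff)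
  have ty: "w_min / 2 \<le> t$i * y$i"
    using residual_bounds(1)[of i] w_min_le[of i] residual_small(1) by (simp add: abs_le_iff)
  have eR: "residual * R \<le> w_min / 4" using residual_small(2) R_pos by (simp add: field_simps)
  have "0 < t$i"
  proof (rule ccontr)
    assume "\<not> 0 < t$i"
    then have "\<bar>t$i\<bar> * \<bar>y$i\<bar> \<le> residual * R"
      using t_ge abs_y_le_R[of i] by (intro mult_mono) auto
    moreover have "t$i * y$i \<le> \<bar>t$i\<bar> * \<bar>y$i\<bar>" by (simp add: abs_mult[symmetric])
    ultimately show False using ty eR w_min_pos by linarith
  qed
  moreover have "t$i * y$i \<le> R * y$i"
  proof -
    have "0 < t$i * y$i" using ty w_min_pos by linarith
    then have "0 < y$i" using \<open>0 < t$i\<close> by (simp add: zero_less_mult_iff)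
    then show ?thesis using abs_t_le_R[of i] by (intro mult_right_mono) auto
  qed
  ultimately show ?thesis unfolding y_lb_def using ty R_pos by (simp add: field_simps)
qed

lemma y_pos: "0 < y$i"
  using y_lb_pos y_lb_le by (rule less_le_trans)

lemma weighted_y_gap_le:
  "w_min / (R * norm y0) * y_gap^2 \<le> (\<Sum>i\<in>UNIV. w$i * (y$i - y0$i)^2 / (y$i * y0$i))"
  unfolding norm_vec_power2 sum_distrib_left
proof (rule sum_mono)
  fix i
  have "y$i * y0$i \<le> R * norm y0"
    using abs_y_le_R[of i] component_le_norm_cart[of y0 i] y_pos[of i] y0_pos[of i]
    by (intro mult_mono) auto
  then have "w_min / (R * norm y0) \<le> w$i / (y$i * y0$i)"
    using w_min_le[of i] w_min_pos y_pos[of i] y0_pos[of i] by (intro frac_le) auto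
  then have "w_min / (R * norm y0) * (y$i - y0$i)^2 \<le> w$i / (y$i * y0$i) * (y$i - y0$i)^2"
    by (rule mult_right_mono) simp
  then show "w_min / (R * norm y0) * ((y - y0)$i)^2 \<le> w$i * (y$i - y0$i)^2 / (y$i * y0$i)"
    by simp
qed

lemma y_gap_sq_le:
  assumes KKT': "(x', t', p', y0) \<in> KKT_set w U"
  shows "y_gap^2 \<le> mono_const * residual * norm ((x, t, p, y) - (x', t', p', y0))"
proof -
  define D where "D = norm ((x, t, p, y) - (x', t', p', y0))"
  have diff: "(x, t, p, y) - (x', t', p', y0) = (x - x', t - t', p - p', y - y0)" by simp
  have dx: "\<bar>x$i$j - x'$i$j\<bar> \<le> D" for i j
    using abs_matrix_entry_le_norm[of "x - x'" i j]
      norm_le_norm_quadruple(1)[where a="x - x'" and b="t - t'" and c="p - p'" and d="y - y0"]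
    unfolding D_def diff by simp
  have dp: "\<bar>p$j - p'$j\<bar> \<le> D" for j
    using component_le_norm_cart[of "p - p'" j]
      norm_le_norm_quadruple(3)[where a="x - x'" and b="t - t'" and c="p - p'" and d="y - y0"]
    unfolding D_def diff by simp
  have dy: "\<bar>y$i - y0$i\<bar> \<le> D" for i
    using component_le_norm_cart[of "y - y0" i]
      norm_le_norm_quadruple(4)[where a="x - x'" and b="t - t'" and c="p - p'" and d="y - y0"]
    unfolding D_def diff by simp
  have entry: "\<bar>(p$j - p'$j) - U$i$j * (y$i - y0$i)\<bar> + \<xi> * \<bar>x$i$j - x'$i$j\<bar> \<le> (1 + U_bound + \<xi>) * D"
    for i j
  proof -
    have "\<bar>U$i$j * (y$i - y0$i)\<bar> \<le> U_bound * D"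
      unfolding abs_mult using abs_U_le dy by (intro mult_mono) (auto intro: order.trans[OF abs_ge_zero])
    moreover have "\<xi> * \<bar>x$i$j - x'$i$j\<bar> \<le> \<xi> * D" using xi_pos dx by (intro mult_left_mono) auto
    ultimately show ?thesis
      using dp[of j] abs_triangle_ineq4[of "p$j - p'$j" "U$i$j * (y$i - y0$i)"]
      by (simp add: algebra_simps)
  qed
  have "w_min / (R * norm y0) * y_gap^2 \<le> (\<Sum>i\<in>UNIV. w$i * (y$i - y0$i)^2 / (y$i * y0$i))"
    by (rule weighted_y_gap_le)
  also have "\<dots> \<le> residual * ((\<Sum>i\<in>UNIV. \<bar>y$i - y0$i\<bar> / y$i) + (\<Sum>j\<in>UNIV. \<bar>p$j - p'$j\<bar>)
      + (\<Sum>i\<in>UNIV. \<bar>y$i - y0$i\<bar>)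
      + (\<Sum>i\<in>UNIV. \<Sum>j\<in>UNIV. \<bar>(p$j - p'$j) - U$i$j * (y$i - y0$i)\<bar> + \<xi> * \<bar>x$i$j - x'$i$j\<bar>))"
    by (intro KKT_monotonicity_bound[OF xi_pos KKT', where t=t] y_pos y0_pos x_nonneg residual_bounds)
  also have "\<dots> \<le> residual * (CARD('n) * (D / y_lb) + CARD('m) * D + CARD('n) * D
      + CARD('n) * (CARD('m) * ((1 + U_bound + \<xi>) * D)))"
    using y_lb_pos y_lb_le dy dp entry
    by (intro mult_left_mono add_mono sum_bounded_above frac_le) (auto intro: order.trans[OF abs_ge_zero])
  also have "\<dots> = w_min / (R * norm y0) * (mono_const * residual * D)"
    unfolding mono_const_def using w_min_pos R_pos norm_y0_pos by (simp add: field_simps)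
  finally have "w_min / (R * norm y0) * y_gap^2 \<le> w_min / (R * norm y0) * (mono_const * residual * D)" .
  then show ?thesis
    unfolding D_def by (rule mult_left_le_imp_le) (use w_min_pos R_pos norm_y0_pos in simp)
qed

lemma y_gap_less: "y_gap < slack_min / (4 * U_bound)"
proof -
  define Z where "Z = R + norm (x0, t0, p0, y0)"
  have "0 \<le> mono_const * Z" unfolding Z_def using mono_const_nonneg R_pos by simp
  then have "0 < 2 * (mono_const * Z + 1)" by simp
  then have "residual * (2 * (mono_const * Z + 1)) \<le> (slack_min / (4 * U_bound))^2"
    using residual_small(5) unfolding Z_def by (simp add: le_divide_eq)
  moreover have "residual * (2 * (mono_const * Z + 1)) = 2 * (residual * (mono_const * Z + 1))"
    by simp
  ultimately have small: "2 * (residual * (mono_const * Z + 1)) \<le> (slack_min / (4 * U_bound))^2"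
    by linarith
  have q0: "0 < (slack_min / (4 * U_bound))^2" using slack_min_pos U_bound_pos by simp
  have "norm ((x, t, p, y) - (x0, t0, p0, y0)) \<le> Z"
    unfolding Z_def using norm_triangle_ineq4[of "(x, t, p, y)" "(x0, t0, p0, y0)"] norm_le_R by linarith
  then have "mono_const * residual * norm ((x, t, p, y) - (x0, t0, p0, y0)) \<le> mono_const * residual * Z"
    using mono_const_nonneg by (intro mult_left_mono) auto
  with y_gap_sq_le[OF KKT] have "y_gap^2 \<le> mono_const * residual * Z" by (rule order_trans)
  also have "\<dots> \<le> residual * (mono_const * Z + 1)" by (simp add: algebra_simps)
  also have "\<dots> < (slack_min / (4 * U_bound))^2" using small q0 by linarith
  finally show ?thesis
    by (rule power_less_imp_less_base) (use slack_min_pos U_bound_pos in simp)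
qed

lemma abs_U_mult_y_diff_le: "\<bar>U$i$j * (y$i - y0$i)\<bar> \<le> U_bound * y_gap"
  unfolding abs_mult using abs_U_le[of i j] component_le_norm_cart[of "y - y0" i]
  by (intro mult_mono) auto

lemma exists_large_share: "\<exists>i. residual < x$i$j"
proof (rule ccontr)
  assume "\<not> ?thesis"
  then have "(\<Sum>i\<in>UNIV. x$i$j) \<le> CARD('n) * residual"
    by (intro sum_bounded_above) (simp add: not_less)
  also have "\<dots> \<le> 1 / 4" using residual_small(3) by (simp add: field_simps)
  moreover have "residual \<le> 1 / 4"
    using residual_small(3) by (rule order_trans) (simp add: field_simps)
  ultimately show False using residual_bounds(4)[of j] by (simp add: abs_le_iff)
qed

lemma price_gap_le: "\<bar>p$j - p0$j\<bar> \<le> (\<xi> + 1) * residual + U_bound * y_gap"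
proof -
  obtain i where "residual < x$i$j" using exists_large_share by blast
  then have "(p$j - U$i$j * y$i) / \<xi> \<le> residual"
    using residual_bounds(2)[of i j] by (simp add: abs_le_iff min_le_iff_disj)
  then have "p$j - U$i$j * y$i \<le> \<xi> * residual" using xi_pos by (simp add: divide_le_eq mult.commute)
  moreover have "U$i$j * y0$i \<le> p0$j" using KKT_setD(3)[OF KKT, of j i] by simp
  moreover have "U$i$j * (y$i - y0$i) \<le> U_bound * y_gap"
    using abs_U_mult_y_diff_le[of i j] by simp
  ultimately have up: "p$j - p0$j \<le> \<xi> * residual + U_bound * y_gap" by (simp add: algebra_simps)
  obtain i' where "0 < x0$i'$j" using exists_buyer by blast
  then have "p0$j = U$i'$j * y0$i'" using KKT_setD(2)[OF KKT, of i' j] by simp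
  moreover have "- (U$i'$j * (y$i' - y0$i')) \<le> U_bound * y_gap"
    using abs_U_mult_y_diff_le[of i' j] by simp
  ultimately have "p0$j - p$j \<le> residual + U_bound * y_gap"
    using residual_bounds(3)[of j i'] by (simp add: algebra_simps)
  moreover have "0 \<le> \<xi> * residual" using xi_pos by simp
  moreover have "(\<xi> + 1) * residual = \<xi> * residual + residual" by (simp add: algebra_simps)
  ultimately show ?thesis using up norm_ge_zero[of "F_res \<xi> w U (x, t, p, y)"]
    unfolding abs_le_iff by linarith
qed

lemma abs_x_le_residual_if_slack:
  assumes slack: "0 < p0$j - U$i$j * y0$i"
  shows "\<bar>x$i$j\<bar> \<le> residual"
proof -
  have "p$j - U$i$j * y$i = (p0$j - U$i$j * y0$i) + (p$j - p0$j) - U$i$j * (y$i - y0$i)"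
    by (simp add: algebra_simps)
  moreover have "slack_min \<le> p0$j - U$i$j * y0$i" using slack_min_le[OF slack] .
  moreover have "- ((\<xi> + 1) * residual + U_bound * y_gap) \<le> p$j - p0$j"
    using price_gap_le[of j] by (simp add: abs_le_iff)
  moreover have "U$i$j * (y$i - y0$i) \<le> U_bound * y_gap"
    using abs_U_mult_y_diff_le[of i j] by simp
  moreover have "y_gap * (4 * U_bound) < slack_min"
    using y_gap_less U_bound_pos by (simp add: pos_less_divide_eq)
  moreover have "residual * (2 * (2 * \<xi> + 1)) \<le> slack_min"
    using residual_small(4) xi_pos by (simp add: pos_le_divide_eq)
  moreover have "(\<xi> + 1) * residual = \<xi> * residual + residual"
    and "y_gap * (4 * U_bound) = 4 * (U_bound * y_gap)"
    and "residual * (2 * (2 * \<xi> + 1)) = 4 * (\<xi> * residual) + 2 * residual"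
    by (simp_all add: algebra_simps)
  ultimately have "\<xi> * residual < p$j - U$i$j * y$i" by linarith
  then have "residual < (p$j - U$i$j * y$i) / \<xi>" using xi_pos by (simp add: less_divide_eq mult.commute)
  then show ?thesis using residual_bounds(2)[of i j] by (simp add: abs_le_iff min_def split: if_splits)
qed

lemma t_gap_le: "\<bar>t$i - t0$i\<bar> \<le> (residual + norm t0 * y_gap) / y_lb"
proof -
  have "y$i * (t$i - t0$i) = (t$i * y$i - w$i) - t0$i * (y$i - y0$i)"
    using KKT_setD(1)[OF KKT, of i] by (simp add: algebra_simps)
  moreover have "\<bar>t0$i * (y$i - y0$i)\<bar> \<le> norm t0 * y_gap"
    unfolding abs_mult using component_le_norm_cart[of t0 i] component_le_norm_cart[of "y - y0" i]
    by (intro mult_mono) auto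
  ultimately have "y$i * \<bar>t$i - t0$i\<bar> \<le> residual + norm t0 * y_gap"
    using residual_bounds(1)[of i] y_pos[of i]
      abs_triangle_ineq4[of "t$i * y$i - w$i" "t0$i * (y$i - y0$i)"]
    by (simp add: abs_mult)
  moreover have "y_lb * \<bar>t$i - t0$i\<bar> \<le> y$i * \<bar>t$i - t0$i\<bar>"
    using y_lb_le[of i] by (intro mult_right_mono) auto
  ultimately show ?thesis using y_lb_pos by (simp add: pos_le_divide_eq mult.commute)
qed

lemma support_map_gap_le:
  "norm (support_map x - support_map x0) \<le> CARD('m) * residual
     + CARD('n) * (residual + (residual + norm t0 * y_gap) / y_lb) + CARD('n) * (CARD('m) * residual)"
proof -
  define V1 :: "real^'m" where "V1 = (\<chi> j. (\<Sum>i\<in>UNIV. x$i$j) - 1)"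
  define V2 :: "real^'n" where "V2 = (\<chi> i. (\<Sum>j\<in>UNIV. U$i$j * x$i$j) - t0$i)"
  define V3 :: "real^'m^'n" where "V3 = (\<chi> i j. if 0 < p0$j - U$i$j * y0$i then x$i$j else 0)"
  have eq: "support_map x - support_map x0 = (V1, V2, V3)"
    unfolding allocation_map_def V1_def V2_def V3_def
    using KKT_setD(4,5)[OF KKT] x0_eq_0_if_slack by (simp add: vec_eq_iff)
  have "norm (V1, V2, V3) \<le> norm V1 + norm V2 + norm V3"
    using norm_Pair_le[of V1 "(V2, V3)"] norm_Pair_le[of V2 V3] by linarith
  moreover have "norm V1 \<le> CARD('m) * residual"
    by (rule norm_le_card_mult_entry_bound) (simp add: V1_def residual_bounds)
  moreover have "norm V2 \<le> CARD('n) * (residual + (residual + norm t0 * y_gap) / y_lb)"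
  proof (rule norm_le_card_mult_entry_bound)
    fix i
    have "V2$i = ((\<Sum>j\<in>UNIV. U$i$j * x$i$j) - t$i) + (t$i - t0$i)" by (simp add: V2_def)
    then show "\<bar>V2$i\<bar> \<le> residual + (residual + norm t0 * y_gap) / y_lb"
      using residual_bounds(5)[of i] t_gap_le[of i]
        abs_triangle_ineq[of "(\<Sum>j\<in>UNIV. U$i$j * x$i$j) - t$i" "t$i - t0$i"]
      by (simp add: abs_minus_commute)
  qed
  moreover have "norm V3 \<le> CARD('n) * (CARD('m) * residual)"
    by (rule norm_matrix_le_card_mult_entry_bound) (simp add: V3_def abs_x_le_residual_if_slack)
  ultimately show ?thesis unfolding eq by linarith
qed

lemma exists_near_KKT_point:
  obtains x' where "(x', t0, p0, y0) \<in> KKT_set w U"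
    and "norm ((x, t, p, y) - (x', t0, p0, y0)) \<le> dist_const * (residual + y_gap)"
proof -
  obtain x' where x'_nonneg: "\<forall>i j. 0 \<le> x'$i$j" and same: "support_map x' = support_map x0"
    and x'_near: "norm (x - x') \<le> hoffman_const * norm (support_map x - support_map x0)"
    using hoffman_projection[OF x_nonneg] by blast
  have col: "(\<Sum>i\<in>UNIV. x'$i$j) = 1" for j
    using arg_cong[OF same, of "\<lambda>z. fst z $ j"] KKT_setD(4)[OF KKT, of j]
    by (simp add: allocation_map_def)
  have row: "t0$i = (\<Sum>j\<in>UNIV. U$i$j * x'$i$j)" for i
    using arg_cong[OF same, of "\<lambda>z. fst (snd z) $ i"] KKT_setD(5)[OF KKT, of i]
    by (simp add: allocation_map_def)
  have off: "x'$i$j = 0" if "0 < p0$j - U$i$j * y0$i" for i j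
    using arg_cong[OF same, of "\<lambda>z. snd (snd z) $ i $ j"] that x0_eq_0_if_slack[OF that]
    by (simp add: allocation_map_def)
  have "(x', t0, p0, y0) \<in> KKT_set w U"
  proof (rule KKT_setI)
    show "x'$i$j * (p0$j - U$i$j * y0$i) = 0" for i j
      using off[of j i] KKT_setD(3)[OF KKT, of j i] by fastforce
  qed (use KKT_setD[OF KKT] col row x'_nonneg in auto)
  moreover have "norm ((x, t, p, y) - (x', t0, p0, y0)) \<le> dist_const * (residual + y_gap)"
  proof -
    define N M where "N = real CARD('n)" and "M = real CARD('m)"
    define A B where "A = hoffman_const * (M + N + N / y_lb + N * M) + N / y_lb + M * (\<xi> + 1)"
      and "B = hoffman_const * N * norm t0 / y_lb + N * norm t0 / y_lb + M * U_bound + 1"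
    have dist: "dist_const = A + B" unfolding dist_const_def A_def B_def N_def M_def by simp
    have "0 \<le> A" "0 \<le> B" unfolding A_def B_def N_def M_def
      using hoffman_const_pos y_lb_pos xi_pos U_bound_pos by simp_all
    have "norm (t - t0) \<le> N * ((residual + norm t0 * y_gap) / y_lb)"
      unfolding N_def by (rule norm_le_card_mult_entry_bound) (simp add: t_gap_le)
    moreover have "norm (p - p0) \<le> M * ((\<xi> + 1) * residual + U_bound * y_gap)"
      unfolding M_def by (rule norm_le_card_mult_entry_bound) (simp add: price_gap_le)
    moreover have "norm (x - x') \<le> hoffman_const *
        (M * residual + N * (residual + (residual + norm t0 * y_gap) / y_lb) + N * (M * residual))"
      using x'_near mult_left_mono[OF support_map_gap_le less_imp_le[OF hoffman_const_pos]]
      unfolding N_def M_def by (rule order_trans)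
    moreover have "norm ((x, t, p, y) - (x', t0, p0, y0))
        \<le> norm (x - x') + norm (t - t0) + norm (p - p0) + y_gap"
      using norm_quadruple_le_sum[of "x - x'" "t - t0" "p - p0" "y - y0"] by simp
    moreover have "hoffman_const * (M * residual + N * (residual + (residual + norm t0 * y_gap) / y_lb)
        + N * (M * residual)) + N * ((residual + norm t0 * y_gap) / y_lb)
        + M * ((\<xi> + 1) * residual + U_bound * y_gap) + y_gap = A * residual + B * y_gap"
      unfolding A_def B_def using y_lb_pos by (simp add: field_simps)
    moreover have "(A + B) * (residual + y_gap) = A * residual + B * y_gap + (A * y_gap + B * residual)"
      by (simp add: algebra_simps)
    moreover have "0 \<le> A * y_gap + B * residual" using \<open>0 \<le> A\<close> \<open>0 \<le> B\<close> by simp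
    ultimately show ?thesis unfolding dist by linarith
  qed
  ultimately show ?thesis using that by blast
qed

lemma y_gap_le: "y_gap \<le> (mono_const * dist_const + 1) * residual"
proof -
  obtain x' where KKT': "(x', t0, p0, y0) \<in> KKT_set w U"
    and near: "norm ((x, t, p, y) - (x', t0, p0, y0)) \<le> dist_const * (residual + y_gap)"
    by (rule exists_near_KKT_point)
  have "y_gap^2 \<le> mono_const * residual * norm ((x, t, p, y) - (x', t0, p0, y0))"
    by (rule y_gap_sq_le[OF KKT'])
  also have "\<dots> \<le> mono_const * residual * (dist_const * (residual + y_gap))"
    using near mono_const_nonneg by (intro mult_left_mono) auto
  also have "\<dots> = (mono_const * dist_const) * residual * (residual + y_gap)"
    by (simp add: algebra_simps)
  finally have sq: "y_gap^2 \<le> (mono_const * dist_const) * residual * (residual + y_gap)" .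
  have "0 \<le> mono_const * dist_const" using mono_const_nonneg dist_const_nonneg by simp
  then show ?thesis using sq by (rule square_le_mult_imp_le[OF norm_ge_zero norm_ge_zero])
qed

lemma infdist_le_residual:
  "infdist (x, t, p, y) (KKT_set w U) \<le> dist_const * (mono_const * dist_const + 2) * residual"
proof -
  obtain x' where KKT': "(x', t0, p0, y0) \<in> KKT_set w U"
    and near: "norm ((x, t, p, y) - (x', t0, p0, y0)) \<le> dist_const * (residual + y_gap)"
    by (rule exists_near_KKT_point)
  have "infdist (x, t, p, y) (KKT_set w U) \<le> norm ((x, t, p, y) - (x', t0, p0, y0))"
    using infdist_le[OF KKT', of "(x, t, p, y)"] by (simp only: dist_norm)
  also have "\<dots> \<le> dist_const * (residual + y_gap)" by (rule near)
  also have "\<dots> \<le> dist_const * (residual + (mono_const * dist_const + 1) * residual)"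
    using y_gap_le dist_const_nonneg by (intro mult_left_mono add_left_mono)
  also have "\<dots> = dist_const * (mono_const * dist_const + 2) * residual"
    by (simp add: algebra_simps)
  finally show ?thesis .
qed

end

lemma (in fisher_KKT_point) infdist_KKT_set_le_residual:
  obtains G where "0 < G" and "\<And>x t p y. (\<And>i j. 0 \<le> x$i$j) \<Longrightarrow> norm (x, t, p, y) \<le> R \<Longrightarrow>
    infdist (x, t, p, y) (KKT_set w U) \<le> G * norm (F_res \<xi> w U (x, t, p, y))"
proof -
  define C where "C = dist_const * (mono_const * dist_const + 2)"
  define Z where "Z = R + norm (x0, t0, p0, y0)"
  have "0 \<le> C" unfolding C_def using dist_const_nonneg mono_const_nonneg by simp
  have "0 < Z" unfolding Z_def using R_pos by (simp add: add_pos_nonneg)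
  have "infdist (x, t, p, y) (KKT_set w U) \<le> (C + Z / eps_threshold) * norm (F_res \<xi> w U (x, t, p, y))"
    if x: "\<And>i j. 0 \<le> x$i$j" and xR: "norm (x, t, p, y) \<le> R" for x t p y
  proof (cases "norm (F_res \<xi> w U (x, t, p, y)) \<le> eps_threshold")
    case True
    then have "fisher_near_point w U \<xi> R x0 t0 p0 y0 x t p y"
      using x xR by unfold_locales
    then have "infdist (x, t, p, y) (KKT_set w U) \<le> C * norm (F_res \<xi> w U (x, t, p, y))"
      unfolding C_def by (rule fisher_near_point.infdist_le_residual)
    also have "\<dots> \<le> (C + Z / eps_threshold) * norm (F_res \<xi> w U (x, t, p, y))"
      using \<open>0 < Z\<close> eps_threshold_pos by (intro mult_right_mono) auto
    finally show ?thesis .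
  next
    case False
    have "infdist (x, t, p, y) (KKT_set w U) \<le> norm ((x, t, p, y) - (x0, t0, p0, y0))"
      using infdist_le[OF KKT, of "(x, t, p, y)"] by (simp only: dist_norm)
    also have "\<dots> \<le> Z"
      unfolding Z_def using norm_triangle_ineq4[of "(x, t, p, y)" "(x0, t0, p0, y0)"] xR by linarith
    also have "\<dots> \<le> Z / eps_threshold * norm (F_res \<xi> w U (x, t, p, y))"
      using False \<open>0 < Z\<close> eps_threshold_pos by (simp add: field_simps)
    also have "\<dots> \<le> (C + Z / eps_threshold) * norm (F_res \<xi> w U (x, t, p, y))"
      using \<open>0 \<le> C\<close> by (intro mult_right_mono) auto
    finally show ?thesis .
  qed
  moreover have "0 < C + Z / eps_threshold"
    using \<open>0 \<le> C\<close> \<open>0 < Z\<close> eps_threshold_pos by (simp add: add_nonneg_pos)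
  ultimately show ?thesis using that by blast
qed

theorem proposition1:
  fixes w :: "real^'n" and U :: "real^'m^'n" and \<xi> R :: real
  assumes "\<xi> > 0" and "R > 0"
    and "\<forall>i. w$i > 0"
    and "assumption1 U"
  shows "\<exists>\<gamma>>0. \<forall>(z :: (real^'m^'n) \<times> (real^'n) \<times> (real^'m) \<times> (real^'n)).
           (\<forall>i j. (fst z)$i$j \<ge> 0) \<longrightarrow> norm z \<le> R \<longrightarrow>
           norm (F_res \<xi> w U z) \<ge> \<gamma> * infdist z (KKT_set w U)"
proof (cases "KKT_set w U = {}")
  case True
  \<comment> \<open>\<open>infdist z {} = 0\<close>\<close>
  then show ?thesis by (intro exI[of _ 1]) (simp add: infdist_def)
next
  case False
  then obtain x0 t0 p0 y0 where "(x0, t0, p0, y0) \<in> KKT_set w U" by auto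
  \<comment> \<open>given a KKT point, only the sign condition \<open>U \<ge> 0\<close> of Assumption 1 is needed\<close>
  then interpret fisher_KKT_point w U \<xi> R x0 t0 p0 y0
    using assms by unfold_locales (auto simp: assumption1_def)
  obtain G where "0 < G" and G: "\<And>x t p y. (\<And>i j. 0 \<le> x$i$j) \<Longrightarrow> norm (x, t, p, y) \<le> R \<Longrightarrow>
      infdist (x, t, p, y) (KKT_set w U) \<le> G * norm (F_res \<xi> w U (x, t, p, y))"
    using infdist_KKT_set_le_residual by blast
  have "1 / G * infdist z (KKT_set w U) \<le> norm (F_res \<xi> w U z)"
    if "\<forall>i j. 0 \<le> (fst z)$i$j" and "norm z \<le> R" for z
    using G[of "fst z" "fst (snd z)" "fst (snd (snd z))" "snd (snd (snd z))"] that \<open>0 < G\<close>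
    by (simp add: field_simps)
  then show ?thesis using \<open>0 < G\<close> by (intro exI[of _ "1 / G"]) auto
qed

end
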